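(* Let $t$ and $m$ be positive integers. Then, as formal power series in $q$, \[ \sum_{n=0}^{\infty}p_{mt,t}(n)q^{n}= \frac{1}{(q;q)_{\infty}}\sum_{n=0}^{\infty}(-1)^{n} q^{\frac{1}{2}(mn^{2}-(m-2)n)t}. \]
   Context: A partition $\lambda$ of a non-negative integer $n$ is a non-increasing sequence of positive integers (its parts) summing to $n$ (the empty partition is the unique partition of $0$). For positive integers $A$ and $a$, $\mathrm{mex}_{A,a}(\lambda)$ denotes the smallest positive integer congruent to $a$ modulo $A$ that is not a part of $\lambda$. Then $p_{A,a}(n)$ denotes the number of partitions $\lambda$ of $n$ satisfying $\mathrm{mex}_{A,a}(\lambda)\equiv a \pmod{2A}$. Also $(a;q)_\infty:=\prod_{j=0}^{\infty}(1-aq^j)$. *)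

theory Defs
  imports "HOL-Library.Multiset" "HOL-Computational_Algebra.Formal_Power_Series"
begin

definition partitions :: "nat \<Rightarrow> nat multiset set" where
  "partitions n = {P. (\<forall>x \<in># P. 0 < x) \<and> sum_mset P = n}"

definition mex :: "nat \<Rightarrow> nat \<Rightarrow> nat multiset \<Rightarrow> nat" where
  "mex A a P = (LEAST k. 0 < k \<and> k mod A = a mod A \<and> k \<notin># P)"

definition p_mex :: "nat \<Rightarrow> nat \<Rightarrow> nat \<Rightarrow> nat" where
  "p_mex A a n = card {P \<in> partitions n. mex A a P mod (2 * A) = a mod (2 * A)}"

text \<open>(q;q)_\<infinity> as a formal power series: the n-th coefficient of the infinite product
  is that of the finite product over j = 1..n (factors with j > n do not affect it).\<close>
definition qpoch_inf :: "rat fps" where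
  "qpoch_inf = Abs_fps (\<lambda>n. fps_nth (\<Prod>j\<in>{1..n}. (1 - fps_X ^ j)) n)"

definition theta_exp :: "nat \<Rightarrow> nat \<Rightarrow> nat \<Rightarrow> nat" where
  "theta_exp m t n = nat ((int m * int n ^ 2 - (int m - 2) * int n) * int t div 2)"

text \<open>The series \<Sum>_{n\<ge>0} (-1)^n q^{theta_exp m t n} as a formal power series.
  Since theta_exp m t n \<ge> n for m,t \<ge> 1, only n \<le> k contribute to q^k.\<close>
definition theta_series :: "nat \<Rightarrow> nat \<Rightarrow> rat fps" where
  "theta_series m t = Abs_fps (\<lambda>k. \<Sum>n\<in>{n. n \<le> k \<and> theta_exp m t n = k}. (-1) ^ n)"

end

theory Submission
  imports Defs
begin

text \<open>Let d(P) be the number of initial terms t, t + mt, t + 2mt, ... of the progression that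
  are parts of P. Then mex_{mt,t}(P) = t + d(P) mt, which is congruent to t modulo 2mt exactly
  when d(P) is even. Writing [d even] as the alternating sum over j \<le> d of (-1)^j and swapping
  the summations, p_{mt,t}(n) becomes the alternating sum over j of the number of partitions of n
  containing the first j terms of the progression. Removing those j parts, of total size
  (m j^2 - (m - 2) j) t / 2, leaves an arbitrary partition of the remainder, and Euler's
  identity 1/(q;q)_\<infinity> = \<Sum> p(n) q^n turns the resulting convolution into the product.\<close>

lemma member_le_sum_mset_nat: "(x::nat) \<in># P \<Longrightarrow> x \<le> sum_mset P"
  by (metis le_add1 sum_mset.remove)

lemma size_le_sum_mset_nat: "\<forall>x\<in>#P. 0 < (x::nat) \<Longrightarrow> size P \<le> sum_mset P"
  by (induction P) auto

lemma mset_set_subseteq_iff: "finite S \<Longrightarrow> mset_set S \<subseteq># P \<longleftrightarrow> S \<subseteq> set_mset P"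
  by (metis finite_set_mset finite_set_mset_mset_set mset_set_set_mset_msubset set_mset_mono
      subset_imp_msubset_mset_set subset_mset.order_trans)

lemma add_mult_mod_double_eq_iff:
  "0 < (A::nat) \<Longrightarrow> (a + d * A) mod (2 * A) = a mod (2 * A) \<longleftrightarrow> even d"
  by (simp add: mod_eq_dvd_iff_nat)

lemma mod_eq_imp_progression:
  assumes "0 < a" "a \<le> A" "0 < k" "k mod A = a mod (A::nat)"
  shows "\<exists>j. k = a + j * A"
proof -
  have "a \<le> k"
  proof (cases "a = A")
    case True
    then show ?thesis using assms by (auto intro: dvd_imp_le)
  next
    case False
    then have "a mod A = a" using assms by simp
    then show ?thesis using assms(4) by (metis mod_less_eq_dividend)
  qed
  then obtain j where "k - a = A * j"
    using assms(4) by (metis dvdE mod_eq_dvd_iff_nat)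
  then show ?thesis using \<open>a \<le> k\<close> by (metis add_diff_inverse_nat mult.commute not_less)
qed

lemma finite_partitions: "finite (partitions n)"
proof (rule finite_subset)
  show "partitions n \<subseteq> mset ` {xs. set xs \<subseteq> {0..n} \<and> length xs \<le> n}"
  proof
    fix P assume "P \<in> partitions n"
    then have pos: "\<forall>x\<in>#P. 0 < x" and sum: "sum_mset P = n"
      unfolding partitions_def by auto
    obtain xs where xs: "P = mset xs" using ex_mset by metis
    have "set xs \<subseteq> {0..n}" using member_le_sum_mset_nat sum xs by fastforce
    moreover have "length xs \<le> n" using size_le_sum_mset_nat[OF pos] sum xs by simp
    ultimately show "P \<in> mset ` {xs. set xs \<subseteq> {0..n} \<and> length xs \<le> n}" using xs by blast
  qed
  show "finite (mset ` {xs. set xs \<subseteq> {0..n} \<and> length xs \<le> n})"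
    by (intro finite_imageI finite_lists_length_le) simp
qed

definition bounded_partitions :: "nat \<Rightarrow> nat \<Rightarrow> nat multiset set" where
  "bounded_partitions N n = {P \<in> partitions n. \<forall>x\<in>#P. x \<le> N}"

lemma finite_bounded_partitions: "finite (bounded_partitions N n)"
  unfolding bounded_partitions_def by (rule finite_subset[OF _ finite_partitions]) blast

lemma bounded_partitions_0: "bounded_partitions 0 n = (if n = 0 then {{#}} else {})"
proof -
  have "(\<forall>x\<in>#P. 0 < x) \<and> (\<forall>x\<in>#P. x \<le> (0::nat)) \<longleftrightarrow> P = {#}" for P
    by (cases P) auto
  then have "bounded_partitions 0 n = {P. P = {#} \<and> sum_mset P = n}"
    unfolding bounded_partitions_def partitions_def by blast
  then show ?thesis by auto
qed

lemma bounded_partitions_eq_partitions: "n \<le> N \<Longrightarrow> bounded_partitions N n = partitions n"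
  unfolding bounded_partitions_def partitions_def using member_le_sum_mset_nat order_trans by blast

lemma card_bounded_partitions_Suc:
  "card (bounded_partitions (Suc N) n) =
     card (bounded_partitions N n) + (if Suc N \<le> n then card (bounded_partitions (Suc N) (n - Suc N)) else 0)"
proof -
  let ?with_N = "{P \<in> bounded_partitions (Suc N) n. Suc N \<in># P}"
  have split: "bounded_partitions (Suc N) n = bounded_partitions N n \<union> ?with_N"
    and disjoint: "bounded_partitions N n \<inter> ?with_N = {}"
    unfolding bounded_partitions_def by (auto simp: le_Suc_eq)
  have "finite ?with_N" using finite_bounded_partitions by simp
  have "card (bounded_partitions (Suc N) n) = card (bounded_partitions N n) + card ?with_N"
    by (subst split) (rule card_Un_disjoint[OF finite_bounded_partitions \<open>finite ?with_N\<close> disjoint])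
  moreover have "card ?with_N = (if Suc N \<le> n then card (bounded_partitions (Suc N) (n - Suc N)) else 0)"
  proof (cases "Suc N \<le> n")
    case True
    have "?with_N = add_mset (Suc N) ` bounded_partitions (Suc N) (n - Suc N)"
    proof (intro equalityI subsetI)
      fix P assume P: "P \<in> ?with_N"
      then have "P - {#Suc N#} \<in> bounded_partitions (Suc N) (n - Suc N)"
        unfolding bounded_partitions_def partitions_def
        by (auto dest: in_diffD) (metis add_diff_cancel_left' sum_mset.remove)
      moreover have "P = add_mset (Suc N) (P - {#Suc N#})" using P by simp
      ultimately show "P \<in> add_mset (Suc N) ` bounded_partitions (Suc N) (n - Suc N)" by blast
    qed (use True in \<open>auto simp: bounded_partitions_def partitions_def\<close>)
    then show ?thesis using True by (simp add: card_image inj_on_def)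
  next
    case False
    then have "?with_N = {}"
      unfolding bounded_partitions_def partitions_def using member_le_sum_mset_nat by fastforce
    then show ?thesis using False by (metis card.empty)
  qed
  ultimately show ?thesis by (simp only:)
qed

definition partition_gf :: "'a::comm_ring_1 fps" where
  "partition_gf = Abs_fps (\<lambda>n. of_nat (card (partitions n)))"

definition bounded_partition_gf :: "nat \<Rightarrow> 'a::comm_ring_1 fps" where
  "bounded_partition_gf N = Abs_fps (\<lambda>n. of_nat (card (bounded_partitions N n)))"

lemma bounded_partition_gf_Suc:
  "(1 - fps_X ^ Suc N) * bounded_partition_gf (Suc N) = bounded_partition_gf N"
proof -
  have "bounded_partition_gf (Suc N) = bounded_partition_gf N + fps_X ^ Suc N * bounded_partition_gf (Suc N)"
  proof (rule fps_ext)
    fix n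
    show "fps_nth (bounded_partition_gf (Suc N)) n =
        fps_nth (bounded_partition_gf N + fps_X ^ Suc N * bounded_partition_gf (Suc N)) n"
      unfolding bounded_partition_gf_def fps_add_nth fps_X_power_mult_nth fps_nth_Abs_fps
      by (subst card_bounded_partitions_Suc) (simp add: not_less)
  qed
  then show ?thesis by (simp only: left_diff_distrib mult_1 diff_eq_eq)
qed

lemma prod_one_minus_X_power_Suc:
  "(\<Prod>j\<in>{1..Suc N}. 1 - fps_X ^ j :: 'a::comm_ring_1 fps) =
     (\<Prod>j\<in>{1..N}. 1 - fps_X ^ j) * (1 - fps_X ^ Suc N)"
  by (simp add: mult.commute)

lemma prod_one_minus_X_power_mult_bounded_partition_gf:
  "(\<Prod>j\<in>{1..N}. 1 - fps_X ^ j) * (bounded_partition_gf N :: 'a::comm_ring_1 fps) = 1"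
proof (induction N)
  case 0
  show ?case by (simp add: bounded_partition_gf_def fps_eq_iff bounded_partitions_0)
next
  case (Suc N)
  have "(\<Prod>j\<in>{1..Suc N}. 1 - fps_X ^ j) * (bounded_partition_gf (Suc N) :: 'a fps) =
      (\<Prod>j\<in>{1..N}. 1 - fps_X ^ j) * ((1 - fps_X ^ Suc N) * bounded_partition_gf (Suc N))"
    by (simp only: prod_one_minus_X_power_Suc mult.assoc)
  also have "\<dots> = 1"
    by (simp only: bounded_partition_gf_Suc Suc.IH)
  finally show ?case .
qed

lemma fps_nth_prod_one_minus_X_power:
  "i \<le> N \<Longrightarrow> fps_nth (\<Prod>j\<in>{1..N}. 1 - fps_X ^ j :: 'a::comm_ring_1 fps) i =
     fps_nth (\<Prod>j\<in>{1..i}. 1 - fps_X ^ j) i"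
proof (induction N)
  case (Suc N)
  show ?case
  proof (cases "i = Suc N")
    case False
    let ?Q = "\<Prod>j\<in>{1..N}. 1 - fps_X ^ j :: 'a fps"
    have "(\<Prod>j\<in>{1..Suc N}. 1 - fps_X ^ j) = ?Q - ?Q * fps_X ^ Suc N"
      by (simp only: prod_one_minus_X_power_Suc right_diff_distrib mult_1_right)
    moreover have "fps_nth (?Q * fps_X ^ Suc N) i = 0"
      using False Suc.prems by (simp add: fps_X_power_mult_right_nth del: power_Suc)
    ultimately show ?thesis using Suc False by simp
  qed simp
qed simp

lemma qpoch_inf_mult_partition_gf: "qpoch_inf * partition_gf = 1"
proof (rule fps_ext)
  fix n
  have "fps_nth (qpoch_inf * partition_gf) n =
      fps_nth ((\<Prod>j\<in>{1..n}. 1 - fps_X ^ j) * bounded_partition_gf n) n"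
    unfolding fps_mult_nth
  proof (intro sum.cong refl)
    fix i assume "i \<in> {0..n}"
    then have "i \<le> n" by simp
    then show "fps_nth qpoch_inf i * fps_nth partition_gf (n - i) =
        fps_nth (\<Prod>j\<in>{1..n}. 1 - fps_X ^ j) i * fps_nth (bounded_partition_gf n) (n - i)"
      unfolding fps_nth_prod_one_minus_X_power[OF \<open>i \<le> n\<close>]
      by (simp add: qpoch_inf_def partition_gf_def bounded_partition_gf_def bounded_partitions_eq_partitions)
  qed
  also have "\<dots> = fps_nth 1 n"
    by (simp only: prod_one_minus_X_power_mult_bounded_partition_gf)
  finally show "fps_nth (qpoch_inf * partition_gf) n = fps_nth 1 n" .
qed

lemma inverse_qpoch_inf: "inverse qpoch_inf = partition_gf"
  using qpoch_inf_mult_partition_gf by (rule fps_inverse_unique)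

lemma card_partitions_containing:
  assumes "\<forall>x\<in>#M. 0 < x"
  shows "card {P \<in> partitions n. M \<subseteq># P} =
    (if sum_mset M \<le> n then card (partitions (n - sum_mset M)) else 0)"
proof (cases "sum_mset M \<le> n")
  case True
  have "{P \<in> partitions n. M \<subseteq># P} = (\<lambda>Q. Q + M) ` partitions (n - sum_mset M)"
  proof (intro equalityI subsetI)
    fix P assume P: "P \<in> {P \<in> partitions n. M \<subseteq># P}"
    then have "P - M \<in> partitions (n - sum_mset M)"
      unfolding partitions_def by (auto dest: in_diffD simp: sum_mset_diff)
    moreover have "P = (P - M) + M" using P by simp
    ultimately show "P \<in> (\<lambda>Q. Q + M) ` partitions (n - sum_mset M)" by blast
  qed (use True assms in \<open>auto simp: partitions_def\<close>)
  then show ?thesis using True by (simp add: card_image inj_on_def)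
next
  case False
  then have "{P \<in> partitions n. M \<subseteq># P} = {}"
    unfolding partitions_def by (auto simp: subset_mset.le_iff_add)
  then show ?thesis using False by (metis card.empty)
qed

definition run_length :: "nat \<Rightarrow> nat \<Rightarrow> nat multiset \<Rightarrow> nat" where
  "run_length A a P = (LEAST j. a + j * A \<notin># P)"

lemma run_length_notin:
  assumes "0 < A"
  shows "a + run_length A a P * A \<notin># P"
  unfolding run_length_def
proof (rule LeastI)
  have "sum_mset P \<le> sum_mset P * A" using assms by simp
  then have "sum_mset P < a + Suc (sum_mset P) * A" using assms by (simp; linarith)
  then show "a + Suc (sum_mset P) * A \<notin># P" using member_le_sum_mset_nat leD by blast
qed

lemma le_run_length_iff:
  assumes "0 < A"
  shows "j \<le> run_length A a P \<longleftrightarrow> (\<forall>i<j. a + i * A \<in># P)"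
proof
  assume "j \<le> run_length A a P"
  then show "\<forall>i<j. a + i * A \<in># P"
    unfolding run_length_def using not_less_Least order_less_le_trans by blast
next
  assume "\<forall>i<j. a + i * A \<in># P"
  then show "j \<le> run_length A a P" using run_length_notin[OF assms] not_le by blast
qed

lemma run_length_le_sum_mset:
  assumes "0 < a" "0 < A"
  shows "run_length A a P \<le> sum_mset P"
proof (rule ccontr)
  assume "\<not> run_length A a P \<le> sum_mset P"
  then have "a + sum_mset P * A \<in># P" using le_run_length_iff[OF assms(2)] not_le by blast
  then have "a + sum_mset P * A \<le> sum_mset P" by (rule member_le_sum_mset_nat)
  moreover have "sum_mset P \<le> sum_mset P * A" using assms by simp
  ultimately show False using assms by linarith
qed

lemma mex_eq_run_length:
  assumes "0 < a" "a \<le> A"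
  shows "mex A a P = a + run_length A a P * A"
  unfolding mex_def
proof (rule Least_equality)
  have "0 < A" using assms by simp
  then show "0 < a + run_length A a P * A \<and> (a + run_length A a P * A) mod A = a mod A \<and>
      a + run_length A a P * A \<notin># P"
    using assms run_length_notin[of A a P] by simp
  fix k assume k: "0 < k \<and> k mod A = a mod A \<and> k \<notin># P"
  then obtain j where j: "k = a + j * A" using mod_eq_imp_progression assms by blast
  then have "\<not> Suc j \<le> run_length A a P"
    using k le_run_length_iff[OF \<open>0 < A\<close>, of "Suc j" a P] by auto
  then show "a + run_length A a P * A \<le> k" using j by simp
qed

lemma mex_mod_double_eq_iff:
  assumes "0 < a" "a \<le> A"
  shows "mex A a P mod (2 * A) = a mod (2 * A) \<longleftrightarrow> even (run_length A a P)"
proof -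
  have "0 < A" using assms by simp
  then show ?thesis by (simp only: mex_eq_run_length[OF assms] add_mult_mod_double_eq_iff)
qed

definition progression :: "nat \<Rightarrow> nat \<Rightarrow> nat \<Rightarrow> nat multiset" where
  "progression A a j = mset_set ((\<lambda>i. a + i * A) ` {..<j})"

lemma progression_subseteq_iff:
  "0 < A \<Longrightarrow> progression A a j \<subseteq># P \<longleftrightarrow> j \<le> run_length A a P"
  unfolding progression_def by (auto simp: mset_set_subseteq_iff le_run_length_iff)

lemma progression_pos: "0 < a \<Longrightarrow> \<forall>x\<in>#progression A a j. 0 < x"
  unfolding progression_def by simp

lemma sum_progression:
  assumes "0 < A"
  shows "sum_mset (progression A a j) = (\<Sum>i<j. a + i * A)"
proof -
  have "inj (\<lambda>i. a + i * A)" using assms by (simp add: inj_def)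
  then show ?thesis
    unfolding progression_def sum_unfold_sum_mset by (simp add: image_mset_mset_set inj_on_subset)
qed

lemma size_progression: "0 < A \<Longrightarrow> size (progression A a j) = j"
  unfolding progression_def by (simp add: card_image inj_on_def)

lemma theta_exp_eq_sum_progression:
  assumes "0 < m" "0 < t"
  shows "theta_exp m t j = sum_mset (progression (m * t) t j)"
proof -
  have "2 * int (\<Sum>i<j. t + i * (m * t)) = (int m * int j ^ 2 - (int m - 2) * int j) * int t"
    by (induction j) (auto simp: algebra_simps power2_eq_square)
  then show ?thesis
    unfolding theta_exp_def sum_progression[of "m * t", OF mult_pos_pos[OF assms]]
    by (metis nat_int nonzero_mult_div_cancel_left zero_neq_numeral)
qed

lemma le_theta_exp:
  assumes "0 < m" "0 < t"
  shows "j \<le> theta_exp m t j"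
  using size_le_sum_mset_nat[OF progression_pos[OF assms(2)], of "m * t" j] assms
  by (simp add: theta_exp_eq_sum_progression size_progression)

lemma card_partitions_containing_progression:
  assumes "0 < m" "0 < t"
  shows "card {P \<in> partitions n. progression (m * t) t j \<subseteq># P} =
    (if theta_exp m t j \<le> n then card (partitions (n - theta_exp m t j)) else 0)"
  unfolding theta_exp_eq_sum_progression[OF assms]
  using card_partitions_containing[OF progression_pos[OF assms(2)]] .

lemma even_indicator_eq_alternating_sum: "(if even d then 1 else 0 :: 'a::ring_1) = (\<Sum>j\<le>d. (-1) ^ j)"
  by (induction d) auto

lemma p_mex_eq_alternating_sum:
  assumes "0 < a" "a \<le> A"
  shows "(of_nat (p_mex A a n) :: 'a::comm_ring_1) =
    (\<Sum>j\<le>n. (-1) ^ j * of_nat (card {P \<in> partitions n. progression A a j \<subseteq># P}))"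
proof -
  have "0 < A" using assms by simp
  have indicator: "(if even (run_length A a P) then 1 else 0 :: 'a) =
      (\<Sum>j\<le>n. if progression A a j \<subseteq># P then (-1) ^ j else 0)" if "P \<in> partitions n" for P
  proof -
    have "sum_mset P = n" using that by (simp add: partitions_def)
    then have "run_length A a P \<le> n" using run_length_le_sum_mset[OF assms(1) \<open>0 < A\<close>, of P] by simp
    then have "{j \<in> {..n}. progression A a j \<subseteq># P} = {..run_length A a P}"
      by (auto simp: progression_subseteq_iff[OF \<open>0 < A\<close>])
    then show ?thesis
      by (simp add: sum.inter_filter[symmetric] even_indicator_eq_alternating_sum)
  qed
  have "(of_nat (p_mex A a n) :: 'a) = (\<Sum>P\<in>partitions n. if even (run_length A a P) then 1 else 0)"
    unfolding p_mex_def mex_mod_double_eq_iff[OF assms]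
    by (simp add: sum.inter_filter[symmetric] finite_partitions)
  also have "\<dots> = (\<Sum>P\<in>partitions n. \<Sum>j\<le>n. if progression A a j \<subseteq># P then (-1) ^ j else 0)"
    using indicator by (rule sum.cong[OF refl])
  also have "\<dots> = (\<Sum>j\<le>n. \<Sum>P\<in>partitions n. if progression A a j \<subseteq># P then (-1) ^ j else 0)"
    by (rule sum.swap)
  also have "\<dots> = (\<Sum>j\<le>n. (-1) ^ j * of_nat (card {P \<in> partitions n. progression A a j \<subseteq># P}))"
    by (simp add: sum.inter_filter[symmetric] finite_partitions mult.commute)
  finally show ?thesis .
qed

lemma fps_nth_mult_theta_series:
  assumes "0 < m" "0 < t"
  shows "fps_nth (f * theta_series m t) n =
    (\<Sum>j\<le>n. if theta_exp m t j \<le> n then (-1) ^ j * fps_nth f (n - theta_exp m t j) else 0)"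
proof -
  have theta_nth: "fps_nth (theta_series m t) i = (\<Sum>j\<le>n. if theta_exp m t j = i then (-1) ^ j else 0)"
    if "i \<le> n" for i
  proof -
    have "{j. j \<le> i \<and> theta_exp m t j = i} = {j \<in> {..n}. theta_exp m t j = i}"
      using that le_theta_exp[OF assms] order_trans by blast
    then show ?thesis unfolding theta_series_def by (simp add: sum.inter_filter[symmetric])
  qed
  have "fps_nth (f * theta_series m t) n = (\<Sum>i\<le>n. fps_nth (theta_series m t) i * fps_nth f (n - i))"
    by (simp only: mult.commute[of f] fps_mult_nth atLeast0AtMost)
  also have "\<dots> = (\<Sum>i\<le>n. \<Sum>j\<le>n. if theta_exp m t j = i then (-1) ^ j * fps_nth f (n - i) else 0)"
    by (intro sum.cong refl) (auto simp: theta_nth sum_distrib_right intro!: sum.cong)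
  also have "\<dots> = (\<Sum>j\<le>n. \<Sum>i\<le>n. if theta_exp m t j = i then (-1) ^ j * fps_nth f (n - i) else 0)"
    by (rule sum.swap)
  also have "\<dots> = (\<Sum>j\<le>n. if theta_exp m t j \<le> n then (-1) ^ j * fps_nth f (n - theta_exp m t j) else 0)"
    by simp
  finally show ?thesis .
qed

theorem lemma2p1:
  fixes t m :: nat
  assumes "0 < t" and "0 < m"
  shows "(Abs_fps (\<lambda>n. of_nat (p_mex (m * t) t n)) :: rat fps) = inverse qpoch_inf * theta_series m t"
proof (rule fps_ext)
  fix n
  have "(of_nat (p_mex (m * t) t n) :: rat) =
      (\<Sum>j\<le>n. (-1) ^ j * of_nat (card {P \<in> partitions n. progression (m * t) t j \<subseteq># P}))"
    using assms by (intro p_mex_eq_alternating_sum) simp_all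
  also have "\<dots> = (\<Sum>j\<le>n. if theta_exp m t j \<le> n
      then (-1) ^ j * fps_nth partition_gf (n - theta_exp m t j) else 0)"
    using assms by (intro sum.cong refl) (simp add: card_partitions_containing_progression partition_gf_def)
  also have "\<dots> = fps_nth (inverse qpoch_inf * theta_series m t) n"
    unfolding inverse_qpoch_inf by (rule fps_nth_mult_theta_series[OF assms(2,1), symmetric])
  finally show "fps_nth (Abs_fps (\<lambda>n. of_nat (p_mex (m * t) t n))) n =
      fps_nth (inverse qpoch_inf * theta_series m t) n" by simp
qed

end
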